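(* Let $m\ge 2$, $k\ge 1$, $n\ge 1$, and let $\mathcal{A}=(a_{i_1i_2\cdots i_m})\in\mathbb{C}^{[m,n]}$ and $\mathcal{B}=(b_{i_1i_2\cdots i_k})\in\mathbb{C}^{[k,n]}$. Then: (1) $r_i(\mathcal{A}\mathcal{B})\le r_i(\mathcal{A})\,(R(\mathcal{B}))^{m-1}$ for all $i\in[n]$; (2) if $\mathcal{A}$ and $\mathcal{B}$ are nonnegative tensors, then for all $i\in[n]$, \[r_i(\mathcal{A}\mathcal{B})=\sum_{i_2,\ldots,i_m=1}^n a_{ii_2\cdots i_m}\, r_{i_2}(\mathcal{B})\cdots r_{i_m}(\mathcal{B}).\]
   Context: $[n]=\{1,\ldots,n\}$. $\mathbb{C}^{[m,n]}$ (resp. $\mathbb{R}_+^{[m,n]}$) denotes the set of order $m$, dimension $n$ tensors $\mathcal{A}=(a_{i_1\cdots i_m})$, $i_j\in[n]$, with complex (resp. nonnegative real) entries. For $\mathcal{A}\in\mathbb{C}^{[m,n]}$: $r_i(\mathcal{A})=\sum_{i_2,\ldots,i_m=1}^n |a_{ii_2\cdots i_m}|$, $r(\mathcal{A})=\min_{i\in[n]} r_i(\mathcal{A})$, $R(\mathcal{A})=\max_{i\in[n]} r_i(\mathcal{A})$. General product: for $\mathcal{A}\in\mathbb{C}^{[m,n]}$ ($m\ge2$) and $\mathcal{B}\in\mathbb{C}^{[k,n]}$ ($k\ge1$), $\mathcal{A}\mathcal{B}=(c_{i\alpha_1\cdots\alpha_{m-1}})$ is the order $(m-1)(k-1)+1$,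 dimension $n$ tensor with entries $c_{i\alpha_1\cdots\alpha_{m-1}}=\sum_{i_2,\ldots,i_m=1}^n a_{ii_2\cdots i_m} b_{i_2\alpha_1}\cdots b_{i_m\alpha_{m-1}}$ for $i\in[n]$, $\alpha_1,\ldots,\alpha_{m-1}\in[n]^{k-1}$ (here $b_{j\alpha}$ with $\alpha=(j_2,\ldots,j_k)$ means $b_{jj_2\cdots j_k}$). Thus $r_i(\mathcal{A}\mathcal{B})=\sum_{\alpha_1,\ldots,\alpha_{m-1}\in[n]^{k-1}}|c_{i\alpha_1\cdots\alpha_{m-1}}|$. *)

theory Defs
  imports "HOL-Analysis.Analysis"
begin

text \<open>A tensor of order m and dimension n is modelled as a function from index lists
  (of length m, entries in {0..<n}, i.e. 0-based indices) to its entries; values at other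
  lists are irrelevant.\<close>

type_synonym 'a tensor = "nat list \<Rightarrow> 'a"

definition idx :: "nat \<Rightarrow> nat \<Rightarrow> nat list set" where
  "idx m n = {xs. length xs = m \<and> set xs \<subseteq> {..<n}}"

definition row_sum :: "complex tensor \<Rightarrow> nat \<Rightarrow> nat \<Rightarrow> nat \<Rightarrow> real" where
  "row_sum A m n i = (\<Sum>xs\<in>idx (m - 1) n. cmod (A (i # xs)))"

definition max_row_sum :: "complex tensor \<Rightarrow> nat \<Rightarrow> nat \<Rightarrow> real" where
  "max_row_sum A m n = Max ((row_sum A m n) ` {..<n})"

text \<open>The t-th block (t = 0..m-2) of length k-1 of the index list ys = alpha_1 ... alpha_{m-1}.\<close>
definition block :: "nat \<Rightarrow> nat \<Rightarrow> nat list \<Rightarrow> nat list" where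
  "block k t ys = take (k - 1) (drop (t * (k - 1)) ys)"

text \<open>General product AB (A of order m, B of order k, dimension n); the result has order
  (m-1)(k-1)+1 and entry at i # alpha_1 ... alpha_{m-1} equal to
  sum_{i_2..i_m} a_{i i_2..i_m} b_{i_2 alpha_1} ... b_{i_m alpha_{m-1}}.\<close>
definition gen_prod :: "complex tensor \<Rightarrow> nat \<Rightarrow> complex tensor \<Rightarrow> nat \<Rightarrow> nat \<Rightarrow> complex tensor" where
  "gen_prod A m B k n = (\<lambda>xs. (\<Sum>js\<in>idx (m - 1) n.
      A (hd xs # js) * (\<Prod>t<m - 1. B (js ! t # block k t (tl xs)))))"

definition prod_order :: "nat \<Rightarrow> nat \<Rightarrow> nat" where
  "prod_order m k = (m - 1) * (k - 1) + 1"

end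

theory Submission
  imports Defs
begin

text \<open>Expanding the modulus of each entry of AB by the triangle inequality gives a sum over
  pairs of index lists; after swapping the two sums, the sum over the concatenated blocks
  alpha_1 ... alpha_{m-1} factors into the product of the row sums of B. For nonnegative
  tensors no cancellation occurs, so the triangle inequality is an equality.\<close>

lemma nth_idx_lessThan: "js \<in> idx q n \<Longrightarrow> t < q \<Longrightarrow> js ! t < n"
  unfolding idx_def by (auto dest: nth_mem)

lemma Cons_block_in_idx:
  assumes "ys \<in> idx ((m - 1) * (k - 1)) n" "t < m - 1" "j < n" "k \<ge> 1"
  shows "j # block k t ys \<in> idx k n"
proof -
  have "t * (k - 1) + (k - 1) \<le> (m - 1) * (k - 1)"
    using assms(2) by (metis Suc_leI add.commute mult_Suc mult_le_mono1)
  then have "length (block k t ys) = k - 1"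
    using assms(1) unfolding block_def idx_def by auto
  moreover have "set (block k t ys) \<subseteq> {..<n}"
    using assms(1) unfolding block_def idx_def by (auto dest: in_set_takeD in_set_dropD)
  ultimately show ?thesis
    using assms(3,4) unfolding idx_def by (cases k) auto
qed

lemma sum_idx_add:
  "(\<Sum>ys\<in>idx (q + r) n. g ys) = (\<Sum>as\<in>idx q n. \<Sum>bs\<in>idx r n. g (as @ bs))"
proof -
  have split: "idx (q + r) n = (\<lambda>(as, bs). as @ bs) ` (idx q n \<times> idx r n)"
  proof
    show "idx (q + r) n \<subseteq> (\<lambda>(as, bs). as @ bs) ` (idx q n \<times> idx r n)"
    proof
      fix ys assume ys: "ys \<in> idx (q + r) n"
      then have "take q ys \<in> idx q n" "drop q ys \<in> idx r n"
        unfolding idx_def by (auto dest: in_set_takeD in_set_dropD)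
      then show "ys \<in> (\<lambda>(as, bs). as @ bs) ` (idx q n \<times> idx r n)"
        by (intro image_eqI[of _ _ "(take q ys, drop q ys)"]) auto
    qed
  qed (auto simp: idx_def)
  have "inj_on (\<lambda>(as, bs). as @ bs) (idx q n \<times> idx r n)"
    unfolding inj_on_def idx_def by auto
  then show ?thesis
    by (simp add: split sum.reindex sum.cartesian_product case_prod_unfold)
qed

lemma sum_idx_mult_prod_blocks:
  fixes f :: "nat \<Rightarrow> nat list \<Rightarrow> 'a::comm_semiring_1"
  shows "(\<Sum>ys\<in>idx (p * q) n. \<Prod>t<p. f t (take q (drop (t * q) ys)))
       = (\<Prod>t<p. \<Sum>as\<in>idx q n. f t as)"
proof (induction p arbitrary: f)
  case 0
  have "idx 0 n = {[]}" unfolding idx_def by auto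
  then show ?case by simp
next
  case (Suc p)
  have "(\<Sum>ys\<in>idx (Suc p * q) n. \<Prod>t<Suc p. f t (take q (drop (t * q) ys)))
      = (\<Sum>as\<in>idx q n. \<Sum>bs\<in>idx (p * q) n.
           f 0 as * (\<Prod>t<p. f (Suc t) (take q (drop (t * q) bs))))"
    unfolding mult_Suc sum_idx_add
    by (intro sum.cong refl, subst prod.lessThan_Suc_shift) (simp add: idx_def)
  also have "\<dots> = (\<Sum>as\<in>idx q n. f 0 as) * (\<Prod>t<p. \<Sum>as\<in>idx q n. f (Suc t) as)"
    by (simp add: sum_product[symmetric] Suc.IH[of "\<lambda>t. f (Suc t)"])
  also have "\<dots> = (\<Prod>t<Suc p. \<Sum>as\<in>idx q n. f t as)"
    by (subst prod.lessThan_Suc_shift) simp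
  finally show ?case .
qed

lemma nonneg_Reals_prod: "(\<And>x. x \<in> S \<Longrightarrow> f x \<in> \<real>\<^sub>\<ge>\<^sub>0) \<Longrightarrow> prod f S \<in> \<real>\<^sub>\<ge>\<^sub>0"
  by (induction S rule: infinite_finite_induct) auto

lemma norm_sum_nonneg_Reals:
  assumes "\<And>x. x \<in> S \<Longrightarrow> f x \<in> \<real>\<^sub>\<ge>\<^sub>0"
  shows "cmod (sum f S) = (\<Sum>x\<in>S. cmod (f x))"
proof (rule antisym)
  have "(\<Sum>x\<in>S. cmod (f x)) = Re (sum f S)"
    using assms by (simp add: nonneg_Reals_cmod_eq_Re Re_sum)
  also have "\<dots> \<le> cmod (sum f S)"
    by (rule complex_Re_le_cmod)
  finally show "(\<Sum>x\<in>S. cmod (f x)) \<le> cmod (sum f S)" .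
qed (rule norm_sum)

lemma sum_norm_gen_prod_terms:
  "(\<Sum>ys\<in>idx ((m - 1) * (k - 1)) n. \<Sum>js\<in>idx (m - 1) n.
       cmod (A (i # js)) * (\<Prod>t<m - 1. cmod (B (js ! t # block k t ys))))
   = (\<Sum>js\<in>idx (m - 1) n. cmod (A (i # js)) * (\<Prod>t<m - 1. row_sum B k n (js ! t)))"
  unfolding sum.swap[where A = "idx ((m - 1) * (k - 1)) n"]
proof (intro sum.cong refl)
  fix js
  show "(\<Sum>ys\<in>idx ((m - 1) * (k - 1)) n.
          cmod (A (i # js)) * (\<Prod>t<m - 1. cmod (B (js ! t # block k t ys))))
      = cmod (A (i # js)) * (\<Prod>t<m - 1. row_sum B k n (js ! t))"
    unfolding block_def row_sum_def
    by (simp add: sum_distrib_left[symmetric]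
        sum_idx_mult_prod_blocks[where f = "\<lambda>t as. cmod (B (js ! t # as))"])
qed

lemma row_sum_gen_prod:
  "row_sum (gen_prod A m B k n) (prod_order m k) n i
   = (\<Sum>ys\<in>idx ((m - 1) * (k - 1)) n. cmod (\<Sum>js\<in>idx (m - 1) n.
        A (i # js) * (\<Prod>t<m - 1. B (js ! t # block k t ys))))"
  unfolding row_sum_def prod_order_def gen_prod_def by simp

lemma row_sum_gen_prod_le:
  "row_sum (gen_prod A m B k n) (prod_order m k) n i
   \<le> (\<Sum>js\<in>idx (m - 1) n. cmod (A (i # js)) * (\<Prod>t<m - 1. row_sum B k n (js ! t)))"
  unfolding row_sum_gen_prod sum_norm_gen_prod_terms[symmetric]
  by (intro sum_mono order.trans[OF norm_sum]) (simp add: norm_mult prod_norm)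

lemma row_sum_gen_prod_nonneg:
  assumes A: "\<And>xs. xs \<in> idx m n \<Longrightarrow> A xs \<in> \<real>\<^sub>\<ge>\<^sub>0"
    and B: "\<And>xs. xs \<in> idx k n \<Longrightarrow> B xs \<in> \<real>\<^sub>\<ge>\<^sub>0"
    and "i < n" "m \<ge> 1" "k \<ge> 1"
  shows "row_sum (gen_prod A m B k n) (prod_order m k) n i
       = (\<Sum>js\<in>idx (m - 1) n. cmod (A (i # js)) * (\<Prod>t<m - 1. row_sum B k n (js ! t)))"
  unfolding row_sum_gen_prod sum_norm_gen_prod_terms[symmetric]
proof (intro sum.cong refl)
  fix ys assume ys: "ys \<in> idx ((m - 1) * (k - 1)) n"
  have "A (i # js) * (\<Prod>t<m - 1. B (js ! t # block k t ys)) \<in> \<real>\<^sub>\<ge>\<^sub>0"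
    if js: "js \<in> idx (m - 1) n" for js
  proof (intro nonneg_Reals_mult_I nonneg_Reals_prod A B)
    show "i # js \<in> idx m n" using js \<open>i < n\<close> \<open>m \<ge> 1\<close> unfolding idx_def by auto
    show "js ! t # block k t ys \<in> idx k n" if "t \<in> {..<m - 1}" for t
      using that js ys \<open>k \<ge> 1\<close> by (auto intro: Cons_block_in_idx nth_idx_lessThan)
  qed
  then show "cmod (\<Sum>js\<in>idx (m - 1) n. A (i # js) * (\<Prod>t<m - 1. B (js ! t # block k t ys)))
      = (\<Sum>js\<in>idx (m - 1) n. cmod (A (i # js)) * (\<Prod>t<m - 1. cmod (B (js ! t # block k t ys))))"
    by (simp add: norm_sum_nonneg_Reals norm_mult prod_norm)
qed

lemma prod_row_sum_le_max_row_sum: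
  assumes "js \<in> idx q n"
  shows "(\<Prod>t<q. row_sum B k n (js ! t)) \<le> max_row_sum B k n ^ q"
proof -
  have "(\<Prod>t<q. row_sum B k n (js ! t)) \<le> (\<Prod>t<q. max_row_sum B k n)"
  proof (intro prod_mono conjI)
    fix t assume "t \<in> {..<q}"
    then have "js ! t < n" using assms nth_idx_lessThan by blast
    then show "row_sum B k n (js ! t) \<le> max_row_sum B k n"
      unfolding max_row_sum_def by (intro Max_ge) auto
    show "0 \<le> row_sum B k n (js ! t)" unfolding row_sum_def by (intro sum_nonneg) auto
  qed
  then show ?thesis by simp
qed

theorem lemma2p4:
  fixes A B :: "complex tensor" and m k n :: nat
  assumes "m \<ge> 2" and "k \<ge> 1" and "n \<ge> 1"
  shows "(\<forall>i<n. row_sum (gen_prod A m B k n) (prod_order m k) n i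
            \<le> row_sum A m n i * (max_row_sum B k n) ^ (m - 1))
     \<and> ((\<forall>xs\<in>idx m n. A xs \<in> \<real> \<and> Re (A xs) \<ge> 0) \<and> (\<forall>xs\<in>idx k n. B xs \<in> \<real> \<and> Re (B xs) \<ge> 0)
         \<longrightarrow> (\<forall>i<n. row_sum (gen_prod A m B k n) (prod_order m k) n i
               = (\<Sum>js\<in>idx (m - 1) n. Re (A (i # js)) * (\<Prod>t<m - 1. row_sum B k n (js ! t)))))"
proof (intro conjI allI impI)
  fix i
  have "row_sum (gen_prod A m B k n) (prod_order m k) n i
      \<le> (\<Sum>js\<in>idx (m - 1) n. cmod (A (i # js)) * max_row_sum B k n ^ (m - 1))"
    using row_sum_gen_prod_le
    by (rule order.trans) (intro sum_mono mult_left_mono prod_row_sum_le_max_row_sum norm_ge_zero)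
  also have "\<dots> = row_sum A m n i * max_row_sum B k n ^ (m - 1)"
    unfolding row_sum_def by (simp add: sum_distrib_right)
  finally show "row_sum (gen_prod A m B k n) (prod_order m k) n i
      \<le> row_sum A m n i * max_row_sum B k n ^ (m - 1)" .
next
  fix i assume nonneg: "(\<forall>xs\<in>idx m n. A xs \<in> \<real> \<and> Re (A xs) \<ge> 0) \<and> (\<forall>xs\<in>idx k n. B xs \<in> \<real> \<and> Re (B xs) \<ge> 0)"
    and "i < n"
  have A: "A xs \<in> \<real>\<^sub>\<ge>\<^sub>0" if "xs \<in> idx m n" for xs
    using nonneg that by (auto simp: complex_nonneg_Reals_iff complex_is_Real_iff)
  have B: "B xs \<in> \<real>\<^sub>\<ge>\<^sub>0" if "xs \<in> idx k n" for xs
    using nonneg that by (auto simp: complex_nonneg_Reals_iff complex_is_Real_iff)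
  have "cmod (A (i # js)) = Re (A (i # js))" if "js \<in> idx (m - 1) n" for js
    using that \<open>i < n\<close> \<open>m \<ge> 2\<close> by (intro nonneg_Reals_cmod_eq_Re A) (auto simp: idx_def)
  then show "row_sum (gen_prod A m B k n) (prod_order m k) n i
      = (\<Sum>js\<in>idx (m - 1) n. Re (A (i # js)) * (\<Prod>t<m - 1. row_sum B k n (js ! t)))"
    using row_sum_gen_prod_nonneg[OF A B \<open>i < n\<close>] assms by simp
qed

end
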